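(* Let $\lambda\in(0,r^\alpha)$. For a finite set $E\subset K$ with $\#E\ge2$, if $R(\xi,\eta)>0$ for all distinct $\xi,\eta\in E$, then $R(\xi,E\setminus\{\xi\})>0$ for all $\xi\in E$.
   Context: Let $\{S_i\}_{i=1}^N$ ($N\ge2$) be contractive similitudes of $\mathbb R^d$ with ratios $r_i\in(0,1)$ satisfying the open set condition; $K$ the self-similar set, $\alpha$ its Hausdorff dimension, $r=\min r_i$. $\Sigma^*$ finite words with empty word $\vartheta$, $S_{\mathbf x}$, $r_{\mathbf x}$ compositions/products. $\mathcal J_0=\{\vartheta\}$, $\mathcal J_n=\{i_1\cdots i_k:r_{i_1\cdots i_k}\le r^n<r_{i_1\cdots i_{k-1}}\}$, $X_n=\bigcup_{k\le n}\mathcal J_k$, $|\mathbf x|=n$ on $\mathcal J_n$, parent $\mathbf x^-$ the prefix in $\mathcal J_{n-1}$. Edges: $\{\mathbf x,\mathbf x^-\}$ and horizontal $\{\mathbf x,\mathbf y\}$ ($\mathbf x\ne\mathbf y\in\mathcal J_n$, $\inf_{\xi,\eta\in K}|S_{\mathbf x}(\xi)-S_{\mathbf y}(\eta)|\le\gamma r^n$). Conductances of the $\lambda$-natural random walk: $c(\mathbf x,\mathbf x^-)=r_{\mathbf x}^\alpha\lambda^{-|\mathbf x|}$, $c(\mathbf x,\mathbf y)=r^{\alpha|\mathbf x|}\lambda^{-|\mathbf x|}$ on horizontal edges, zero otherwise; $\mathcal E_{X_n}[f]=\frac12\sum_{\mathbf x,\mathbf y\in X_n}c(\mathbf x,\mathbf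 y)(f(\mathbf x)-f(\mathbf y))^2$. Effective resistance $R_{X_n}(A,B)=(\min\{\mathcal E_{X_n}[f]:f=1$ on $A$, $0$ on $B\})^{-1}$, $0$ if $A\cap B\ne\emptyset$. For a $\kappa$-sequence (maps $\kappa_n:K\to\mathcal J_n$ with $\kappa_n(\xi)$ a prefix of $\kappa_{n+1}(\xi)$ and $\xi\in S_{\kappa_n(\xi)}(K)$ for all $n$), the limiting resistance of closed $\Phi,\Psi\subset K$ is $R(\Phi,\Psi)=\lim_nR_{X_n}(\kappa_n(\Phi),\kappa_n(\Psi))$ (exists, independent of the $\kappa$-sequence); points are identified with singletons. *)

theory Defs
  imports "HOL-Analysis.Analysis" "HOL-Library.Sublist"
begin

definition hausdorff_content :: "real \<Rightarrow> real \<Rightarrow> 'a::metric_space set \<Rightarrow> ennreal" where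
  "hausdorff_content s \<delta> A =
     (INF U \<in> {U :: nat \<Rightarrow> 'a set. A \<subseteq> (\<Union>i. U i) \<and> (\<forall>i. bounded (U i) \<and> diameter (U i) \<le> \<delta>)}.
        (\<Sum>i. ennreal (diameter (U i) powr s)))"

definition hausdorff_measure :: "real \<Rightarrow> 'a::metric_space set \<Rightarrow> ennreal" where
  "hausdorff_measure s A = (SUP \<delta> \<in> {0<..}. hausdorff_content s \<delta> A)"

definition hausdorff_dim :: "'a::metric_space set \<Rightarrow> real" where
  "hausdorff_dim A = Inf {s. 0 \<le> s \<and> hausdorff_measure s A = 0}"

definition similitude :: "('a::euclidean_space \<Rightarrow> 'a) \<Rightarrow> real \<Rightarrow> bool" where
  "similitude f c \<longleftrightarrow> (\<forall>x y. dist (f x) (f y) = c * dist x y)"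

definition open_set_condition :: "nat \<Rightarrow> (nat \<Rightarrow> 'a::euclidean_space \<Rightarrow> 'a) \<Rightarrow> bool" where
  "open_set_condition N S \<longleftrightarrow>
     (\<exists>V. open V \<and> V \<noteq> {} \<and> (\<forall>i\<in>{1..N}. S i ` V \<subseteq> V) \<and>
          (\<forall>i\<in>{1..N}. \<forall>j\<in>{1..N}. i \<noteq> j \<longrightarrow> S i ` V \<inter> S j ` V = {}))"

definition self_similar_set :: "nat \<Rightarrow> (nat \<Rightarrow> 'a::euclidean_space \<Rightarrow> 'a) \<Rightarrow> 'a set \<Rightarrow> bool" where
  "self_similar_set N S K \<longleftrightarrow> compact K \<and> K \<noteq> {} \<and> K = (\<Union>i\<in>{1..N}. S i ` K)"

definition rmin :: "nat \<Rightarrow> (nat \<Rightarrow> real) \<Rightarrow> real" where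
  "rmin N r = Min (r ` {1..N})"

definition wS :: "(nat \<Rightarrow> 'a \<Rightarrow> 'a) \<Rightarrow> nat list \<Rightarrow> 'a \<Rightarrow> 'a" where
  "wS S w = foldr (\<lambda>i g. S i \<circ> g) w id"

definition wr :: "(nat \<Rightarrow> real) \<Rightarrow> nat list \<Rightarrow> real" where
  "wr r w = prod_list (map r w)"

definition words :: "nat \<Rightarrow> nat list set" where
  "words N = {w. set w \<subseteq> {1..N}}"

definition J :: "nat \<Rightarrow> (nat \<Rightarrow> real) \<Rightarrow> nat \<Rightarrow> nat list set" where
  "J N r n = (if n = 0 then {[]} else
     {w \<in> words N. w \<noteq> [] \<and> wr r w \<le> rmin N r ^ n \<and> rmin N r ^ n < wr r (butlast w)})"

definition X :: "nat \<Rightarrow> (nat \<Rightarrow> real) \<Rightarrow> nat \<Rightarrow> nat list set" where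
  "X N r n = (\<Union>k\<le>n. J N r k)"

text \<open>|x| = n for x in J_n (the J_n are pairwise disjoint).\<close>
definition lvl :: "nat \<Rightarrow> (nat \<Rightarrow> real) \<Rightarrow> nat list \<Rightarrow> nat" where
  "lvl N r w = (THE k. w \<in> J N r k)"

definition vert_edge :: "nat \<Rightarrow> (nat \<Rightarrow> real) \<Rightarrow> nat list \<Rightarrow> nat list \<Rightarrow> bool" where
  "vert_edge N r w v \<longleftrightarrow> (\<exists>k\<ge>1. w \<in> J N r k \<and> v \<in> J N r (k - 1) \<and> prefix v w)"

definition horiz_edge :: "nat \<Rightarrow> (nat \<Rightarrow> 'a::euclidean_space \<Rightarrow> 'a) \<Rightarrow> (nat \<Rightarrow> real) \<Rightarrow> 'a set \<Rightarrow> real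
    \<Rightarrow> nat list \<Rightarrow> nat list \<Rightarrow> bool" where
  "horiz_edge N S r K \<gamma> w v \<longleftrightarrow>
     (\<exists>k. w \<in> J N r k \<and> v \<in> J N r k \<and> w \<noteq> v \<and>
          (INF p \<in> K \<times> K. dist (wS S w (fst p)) (wS S v (snd p))) \<le> \<gamma> * rmin N r ^ k)"

definition cond :: "nat \<Rightarrow> (nat \<Rightarrow> 'a::euclidean_space \<Rightarrow> 'a) \<Rightarrow> (nat \<Rightarrow> real) \<Rightarrow> 'a set \<Rightarrow> real
    \<Rightarrow> real \<Rightarrow> real \<Rightarrow> nat list \<Rightarrow> nat list \<Rightarrow> real" where
  "cond N S r K \<gamma> \<alpha> lam w v =
     (if vert_edge N r w v then wr r w powr \<alpha> * inverse (lam ^ lvl N r w)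
      else if vert_edge N r v w then wr r v powr \<alpha> * inverse (lam ^ lvl N r v)
      else if horiz_edge N S r K \<gamma> w v
        then (rmin N r ^ lvl N r w) powr \<alpha> * inverse (lam ^ lvl N r w)
      else 0)"

definition energy :: "nat \<Rightarrow> (nat \<Rightarrow> 'a::euclidean_space \<Rightarrow> 'a) \<Rightarrow> (nat \<Rightarrow> real) \<Rightarrow> 'a set \<Rightarrow> real
    \<Rightarrow> real \<Rightarrow> real \<Rightarrow> nat \<Rightarrow> (nat list \<Rightarrow> real) \<Rightarrow> real" where
  "energy N S r K \<gamma> \<alpha> lam n f =
     1/2 * (\<Sum>x\<in>X N r n. \<Sum>y\<in>X N r n. cond N S r K \<gamma> \<alpha> lam x y * (f x - f y)^2)"

definition eff_res :: "nat \<Rightarrow> (nat \<Rightarrow> 'a::euclidean_space \<Rightarrow> 'a) \<Rightarrow> (nat \<Rightarrow> real) \<Rightarrow> 'a set \<Rightarrow> real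
    \<Rightarrow> real \<Rightarrow> real \<Rightarrow> nat \<Rightarrow> nat list set \<Rightarrow> nat list set \<Rightarrow> real" where
  "eff_res N S r K \<gamma> \<alpha> lam n A B =
     (if A \<inter> B \<noteq> {} then 0 else
        inverse (Inf {energy N S r K \<gamma> \<alpha> lam n f | f.
                        (\<forall>x\<in>A. f x = 1) \<and> (\<forall>x\<in>B. f x = 0)}))"

definition kappa_seq :: "nat \<Rightarrow> (nat \<Rightarrow> 'a::euclidean_space \<Rightarrow> 'a) \<Rightarrow> (nat \<Rightarrow> real) \<Rightarrow> 'a set
    \<Rightarrow> (nat \<Rightarrow> 'a \<Rightarrow> nat list) \<Rightarrow> bool" where
  "kappa_seq N S r K \<kappa> \<longleftrightarrow>
     (\<forall>\<xi>\<in>K. \<forall>n. \<kappa> n \<xi> \<in> J N r n \<and> prefix (\<kappa> n \<xi>) (\<kappa> (Suc n) \<xi>) \<and> \<xi> \<in> wS S (\<kappa> n \<xi>) ` K)"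

definition lim_res :: "nat \<Rightarrow> (nat \<Rightarrow> 'a::euclidean_space \<Rightarrow> 'a) \<Rightarrow> (nat \<Rightarrow> real) \<Rightarrow> 'a set
    \<Rightarrow> real \<Rightarrow> real \<Rightarrow> real \<Rightarrow> (nat \<Rightarrow> 'a \<Rightarrow> nat list) \<Rightarrow> 'a set \<Rightarrow> 'a set \<Rightarrow> ereal" where
  "lim_res N S r K \<gamma> \<alpha> lam \<kappa> \<Phi> \<Psi> =
     lim (\<lambda>n. ereal (eff_res N S r K \<gamma> \<alpha> lam n (\<kappa> n ` \<Phi>) (\<kappa> n ` \<Psi>)))"

end

theory Submission
  imports Defs
begin

(* Let q = \<lambda> / r^\<alpha> < 1. The vertical edges between levels n and n + 1 carry conductance at
   least c0 q^-(n+1), so along them a potential of energy E changes by at most sqrt (2 q^(n+1) E / c0).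
   Hence a unit potential admissible at level n + 1 becomes, after an affine rescaling and
   truncation, admissible at level n at a small extra cost:
   sqrt R_(n+1) \<le> sqrt R_n + sqrt (8 q^(n+1) / c0). So sqrt R_n is almost decreasing and the
   limiting resistances exist. The same edges join every level-n word to the root, so capacities
   are positive. Capacities are subadditive in the target set (take the minimum of admissible
   potentials), which gives the parallel law 1 / R_n(\<xi>, F) \<le> \<Sum>\<^sub>\<eta> 1 / R_n(\<xi>, \<eta>), and in the
   limit R(\<xi>, F) > 0. *)

lemma convergent_if_almost_decreasing:
  fixes \<rho> :: "nat \<Rightarrow> real"
  assumes nonneg: "\<And>n. 0 \<le> \<rho> n" and step: "\<And>n. \<rho> (Suc n) \<le> \<rho> n + D * s ^ n"
    and s: "0 \<le> s" "s < 1" and D: "0 \<le> D"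
  shows "convergent \<rho>"
proof -
  define \<sigma> where "\<sigma> n = \<rho> n + D * s ^ n / (1 - s)" for n
  have "decseq \<sigma>"
  proof (rule decseq_SucI)
    fix n
    have "D * s ^ n + D * s ^ Suc n / (1 - s) = D * s ^ n / (1 - s)"
      using s by (simp add: field_simps)
    then show "\<sigma> (Suc n) \<le> \<sigma> n"
      unfolding \<sigma>_def using step[of n] by linarith
  qed
  moreover have "0 \<le> \<sigma> n" for n
    unfolding \<sigma>_def using nonneg s D by simp
  ultimately obtain L where "\<sigma> \<longlonglongrightarrow> L"
    using decseq_convergent by blast
  moreover have "(\<lambda>n. D * s ^ n / (1 - s)) \<longlonglongrightarrow> 0"
    using s by (auto intro!: tendsto_eq_intros LIMSEQ_power_zero)
  ultimately have "(\<lambda>n. \<sigma> n - D * s ^ n / (1 - s)) \<longlonglongrightarrow> L - 0"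
    by (rule tendsto_diff)
  then show ?thesis
    unfolding \<sigma>_def convergent_def by auto
qed

lemma power_powr:
  fixes x a :: real
  assumes "0 < x"
  shows "(x ^ n) powr a = (x powr a) ^ n"
  using assms by (induction n) (simp_all add: powr_mult)

section \<open>Energy and capacity on a network\<close>

definition dirichlet_energy :: "'v set \<Rightarrow> ('v \<Rightarrow> 'v \<Rightarrow> real) \<Rightarrow> ('v \<Rightarrow> real) \<Rightarrow> real" where
  "dirichlet_energy V c f = 1/2 * (\<Sum>x\<in>V. \<Sum>y\<in>V. c x y * (f x - f y)\<^sup>2)"

definition capacity :: "'v set \<Rightarrow> ('v \<Rightarrow> 'v \<Rightarrow> real) \<Rightarrow> 'v set \<Rightarrow> 'v set \<Rightarrow> real" where
  "capacity V c A B = Inf {dirichlet_energy V c f | f. (\<forall>x\<in>A. f x = 1) \<and> (\<forall>x\<in>B. f x = 0)}"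

lemma clip_min_dist_le:
  fixes a b a' b' :: real
  shows "(max 0 (min a b) - max 0 (min a' b'))\<^sup>2 \<le> (a - a')\<^sup>2 + (b - b')\<^sup>2"
proof -
  have "\<bar>max 0 (min a b) - max 0 (min a' b')\<bar> \<le> max \<bar>a - a'\<bar> \<bar>b - b'\<bar>"
    by (smt (verit))
  then have "\<bar>max 0 (min a b) - max 0 (min a' b')\<bar>\<^sup>2 \<le> (max \<bar>a - a'\<bar> \<bar>b - b'\<bar>)\<^sup>2"
    by (intro power_mono) auto
  also have "\<dots> \<le> (a - a')\<^sup>2 + (b - b')\<^sup>2"
    by (simp add: max_def)
  finally show ?thesis
    by simp
qed

lemma clip_unit_dist_le:
  fixes a b :: real
  shows "(max 0 (min 1 a) - max 0 (min 1 b))\<^sup>2 \<le> (a - b)\<^sup>2"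
proof -
  have "\<bar>max 0 (min 1 a) - max 0 (min 1 b)\<bar> \<le> \<bar>a - b\<bar>"
    by (smt (verit))
  then have "\<bar>max 0 (min 1 a) - max 0 (min 1 b)\<bar>\<^sup>2 \<le> \<bar>a - b\<bar>\<^sup>2"
    by (intro power_mono) auto
  then show ?thesis
    by simp
qed

locale network =
  fixes c :: "'v \<Rightarrow> 'v \<Rightarrow> real"
  assumes conductance_nonneg: "0 \<le> c x y"
begin

abbreviation energy_on :: "'v set \<Rightarrow> ('v \<Rightarrow> real) \<Rightarrow> real" where
  "energy_on V \<equiv> dirichlet_energy V c"

lemma dirichlet_energy_nonneg: "0 \<le> energy_on V f"
  unfolding dirichlet_energy_def using conductance_nonneg by (simp add: sum_nonneg)

lemma dirichlet_energy_le_combination: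
  assumes "0 \<le> a" "0 \<le> b" and dist: "\<And>x y. (g x - g y)\<^sup>2 \<le> a * (f x - f y)\<^sup>2 + b * (h x - h y)\<^sup>2"
  shows "energy_on V g \<le> a * energy_on V f + b * energy_on V h"
proof -
  have pointwise: "c x y * (g x - g y)\<^sup>2 \<le> a * (c x y * (f x - f y)\<^sup>2) + b * (c x y * (h x - h y)\<^sup>2)" for x y
    using mult_left_mono[OF dist conductance_nonneg] by (simp add: algebra_simps)
  have "(\<Sum>x\<in>V. \<Sum>y\<in>V. c x y * (g x - g y)\<^sup>2) \<le>
      (\<Sum>x\<in>V. \<Sum>y\<in>V. a * (c x y * (f x - f y)\<^sup>2) + b * (c x y * (h x - h y)\<^sup>2))"
    by (intro sum_mono pointwise)
  also have "\<dots> = a * (\<Sum>x\<in>V. \<Sum>y\<in>V. c x y * (f x - f y)\<^sup>2) + b * (\<Sum>x\<in>V. \<Sum>y\<in>V. c x y * (h x - h y)\<^sup>2)"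
    by (simp add: sum.distrib sum_distrib_left)
  finally show ?thesis
    unfolding dirichlet_energy_def by (simp add: algebra_simps)
qed

lemma dirichlet_energy_le_scaled:
  assumes "0 \<le> a" and "\<And>x y. (g x - g y)\<^sup>2 \<le> a * (f x - f y)\<^sup>2"
  shows "energy_on V g \<le> a * energy_on V f"
  using dirichlet_energy_le_combination[of a 0 g f f V] assms by simp

lemma conductance_le_dirichlet_energy:
  assumes "finite V" "x \<in> V" "y \<in> V"
  shows "c x y * (f x - f y)\<^sup>2 \<le> 2 * energy_on V f"
proof -
  have term_nonneg: "0 \<le> c u v * (f u - f v)\<^sup>2" for u v
    using conductance_nonneg by simp
  have "c x y * (f x - f y)\<^sup>2 \<le> (\<Sum>v\<in>V. c x v * (f x - f v)\<^sup>2)"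
    using assms term_nonneg by (intro member_le_sum) auto
  also have "\<dots> \<le> (\<Sum>u\<in>V. \<Sum>v\<in>V. c u v * (f u - f v)\<^sup>2)"
    using assms term_nonneg by (intro member_le_sum sum_nonneg) auto
  finally show ?thesis
    unfolding dirichlet_energy_def by simp
qed

lemma dirichlet_energy_mono:
  assumes "V \<subseteq> W" "finite W"
  shows "energy_on V f \<le> energy_on W f"
proof -
  have term_nonneg: "0 \<le> c u v * (f u - f v)\<^sup>2" for u v
    using conductance_nonneg by simp
  have "(\<Sum>x\<in>V. \<Sum>y\<in>V. c x y * (f x - f y)\<^sup>2) \<le> (\<Sum>x\<in>V. \<Sum>y\<in>W. c x y * (f x - f y)\<^sup>2)"
    using assms term_nonneg by (intro sum_mono sum_mono2) auto
  also have "\<dots> \<le> (\<Sum>x\<in>W. \<Sum>y\<in>W. c x y * (f x - f y)\<^sup>2)"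
    using assms term_nonneg by (intro sum_mono2 sum_nonneg) auto
  finally show ?thesis
    unfolding dirichlet_energy_def by simp
qed

abbreviation capacity_on :: "'v set \<Rightarrow> 'v set \<Rightarrow> 'v set \<Rightarrow> real" where
  "capacity_on V \<equiv> capacity V c"

lemma capacity_le:
  assumes "\<forall>x\<in>A. f x = 1" "\<forall>x\<in>B. f x = 0"
  shows "capacity_on V A B \<le> energy_on V f"
  unfolding capacity_def
proof (rule cInf_lower)
  show "energy_on V f \<in> {energy_on V f | f. (\<forall>x\<in>A. f x = 1) \<and> (\<forall>x\<in>B. f x = 0)}"
    using assms by blast
  show "bdd_below {energy_on V f | f. (\<forall>x\<in>A. f x = 1) \<and> (\<forall>x\<in>B. f x = 0)}"
    using dirichlet_energy_nonneg by (intro bdd_belowI[of _ 0]) blast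
qed

lemma admissible_energies_nonempty:
  assumes "A \<inter> B = {}"
  shows "{energy_on V f | f. (\<forall>x\<in>A. f x = 1) \<and> (\<forall>x\<in>B. f x = 0)} \<noteq> {}"
proof -
  have "(\<forall>x\<in>A. indicator A x = (1::real)) \<and> (\<forall>x\<in>B. indicator A x = (0::real))"
    using assms by (auto simp: indicator_def)
  then show ?thesis
    by blast
qed

lemma capacity_ge:
  assumes "A \<inter> B = {}"
    and "\<And>f. \<forall>x\<in>A. f x = 1 \<Longrightarrow> \<forall>x\<in>B. f x = 0 \<Longrightarrow> T \<le> energy_on V f"
  shows "T \<le> capacity_on V A B"
  unfolding capacity_def using assms
  by (intro cInf_greatest[OF admissible_energies_nonempty]) auto

lemma capacity_nonneg: "A \<inter> B = {} \<Longrightarrow> 0 \<le> capacity_on V A B"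
  using capacity_ge dirichlet_energy_nonneg by blast

lemma capacity_approx:
  assumes "A \<inter> B = {}" "0 < e"
  obtains f where "\<forall>x\<in>A. f x = 1" "\<forall>x\<in>B. f x = 0" "energy_on V f < capacity_on V A B + e"
proof -
  have "Inf {energy_on V f | f. (\<forall>x\<in>A. f x = 1) \<and> (\<forall>x\<in>B. f x = 0)} < capacity_on V A B + e"
    using assms(2) unfolding capacity_def by simp
  from cInf_lessD[OF admissible_energies_nonempty[OF assms(1)] this] show ?thesis
    using that by blast
qed

lemma capacity_union_le:
  assumes "A \<inter> B = {}" "A \<inter> B' = {}"
  shows "capacity_on V A (B \<union> B') \<le> capacity_on V A B + capacity_on V A B'"
proof (rule field_le_epsilon)
  fix e :: real
  assume "0 < e"
  then have "0 < e/2"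
    by simp
  obtain f where f: "\<forall>x\<in>A. f x = 1" "\<forall>x\<in>B. f x = 0" "energy_on V f < capacity_on V A B + e/2"
    using capacity_approx[OF assms(1) \<open>0 < e/2\<close>] .
  obtain f' where f': "\<forall>x\<in>A. f' x = 1" "\<forall>x\<in>B'. f' x = 0" "energy_on V f' < capacity_on V A B' + e/2"
    using capacity_approx[OF assms(2) \<open>0 < e/2\<close>] .
  define g where "g x = max 0 (min (f x) (f' x))" for x
  have "capacity_on V A (B \<union> B') \<le> energy_on V g"
    using f(1,2) f'(1,2) by (intro capacity_le) (auto simp: g_def)
  also have "\<dots> \<le> 1 * energy_on V f + 1 * energy_on V f'"
    unfolding g_def by (intro dirichlet_energy_le_combination) (simp_all only: mult_1 clip_min_dist_le)
  finally show "capacity_on V A (B \<union> B') \<le> capacity_on V A B + capacity_on V A B' + e"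
    using f(3) f'(3) by simp
qed

lemma capacity_UN_le:
  assumes "finite F" "F \<noteq> {}" "\<forall>i\<in>F. A \<inter> B i = {}"
  shows "capacity_on V A (\<Union>i\<in>F. B i) \<le> (\<Sum>i\<in>F. capacity_on V A (B i))"
  using assms
proof (induction F rule: finite_ne_induct)
  case (insert i F)
  have "capacity_on V A (\<Union>j\<in>insert i F. B j) \<le> capacity_on V A (B i) + capacity_on V A (\<Union>j\<in>F. B j)"
    using insert.prems by (auto intro: capacity_union_le)
  then show ?case
    using insert by simp
qed simp

lemma capacity_le_rescaled:
  assumes A: "\<forall>x\<in>A. 1 - \<delta> \<le> h x" and B: "\<forall>x\<in>B. h x \<le> \<delta>" and \<delta>: "2 * \<delta> < 1"
  shows "capacity_on V A B \<le> energy_on V h / (1 - 2 * \<delta>)\<^sup>2"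
proof -
  define t where "t = 1 - 2 * \<delta>"
  have t: "0 < t"
    unfolding t_def using \<delta> by simp
  define g where "g x = max 0 (min 1 ((h x - \<delta>) / t))" for x
  have "capacity_on V A B \<le> energy_on V g"
  proof (rule capacity_le)
    show "\<forall>x\<in>A. g x = 1"
      using A t by (auto simp: g_def t_def le_divide_eq)
    show "\<forall>x\<in>B. g x = 0"
      using B t by (auto simp: g_def divide_nonpos_pos)
  qed
  also have "\<dots> \<le> (1 / t)\<^sup>2 * energy_on V h"
  proof (rule dirichlet_energy_le_scaled)
    fix x y
    have "(g x - g y)\<^sup>2 \<le> ((h x - \<delta>) / t - (h y - \<delta>) / t)\<^sup>2"
      unfolding g_def by (rule clip_unit_dist_le)
    also have "\<dots> = (1 / t)\<^sup>2 * (h x - h y)\<^sup>2"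
      by (simp add: power_divide diff_divide_distrib[symmetric])
    finally show "(g x - g y)\<^sup>2 \<le> (1 / t)\<^sup>2 * (h x - h y)\<^sup>2" .
  qed simp
  finally show ?thesis
    by (simp add: t_def power_divide)
qed

end

section \<open>The graph of words\<close>

locale ifs_network =
  fixes N :: nat and S :: "nat \<Rightarrow> 'a::euclidean_space \<Rightarrow> 'a" and r :: "nat \<Rightarrow> real"
    and K :: "'a set" and \<gamma> \<alpha> lam :: real and \<kappa> :: "nat \<Rightarrow> 'a \<Rightarrow> nat list"
  assumes N_pos: "1 \<le> N"
    and ratios: "\<forall>i\<in>{1..N}. 0 < r i \<and> r i < 1"
    and lam_pos: "0 < lam" and lam_less: "lam < rmin N r powr \<alpha>"
    and kappa: "kappa_seq N S r K \<kappa>"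
begin

lemma rmin_in_ratios: "rmin N r \<in> r ` {1..N}"
  unfolding rmin_def using N_pos by (intro Min_in) auto

lemma rmin_pos: "0 < rmin N r"
  using rmin_in_ratios ratios by auto

lemma rmin_less_one: "rmin N r < 1"
  using rmin_in_ratios ratios by auto

lemma rmin_le: "i \<in> {1..N} \<Longrightarrow> rmin N r \<le> r i"
  unfolding rmin_def by simp

lemma wr_pos: "set w \<subseteq> {1..N} \<Longrightarrow> 0 < wr r w"
  unfolding wr_def using ratios by (induction w) auto

lemma J_word_bounds:
  assumes "w \<in> J N r k" "1 \<le> k"
  shows "rmin N r ^ Suc k < wr r w" "wr r w \<le> rmin N r ^ k"
proof -
  have w: "set w \<subseteq> {1..N}" "w \<noteq> []" "wr r w \<le> rmin N r ^ k" "rmin N r ^ k < wr r (butlast w)"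
    using assms unfolding J_def words_def by auto
  have "wr r w = wr r (butlast w @ [last w])"
    using w(2) by simp
  then have split: "wr r w = wr r (butlast w) * r (last w)"
    unfolding wr_def by simp
  have "last w \<in> {1..N}"
    using w(1,2) last_in_set by blast
  then have "rmin N r ^ k * rmin N r < wr r (butlast w) * r (last w)"
    using w(4) rmin_le rmin_pos by (intro mult_less_le_imp_less) auto
  then show "rmin N r ^ Suc k < wr r w"
    using split by (simp add: mult.commute)
  show "wr r w \<le> rmin N r ^ k"
    using w(3) .
qed

lemma J_level_unique:
  assumes "w \<in> J N r k" "w \<in> J N r l"
  shows "k = l"
proof -
  have False if less: "k < l" and w: "w \<in> J N r k" "w \<in> J N r l" for k l
  proof -
    have "1 \<le> k"
      using w less unfolding J_def by (auto split: if_splits)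
    moreover have "rmin N r ^ l \<le> rmin N r ^ Suc k"
      using less rmin_pos rmin_less_one by (intro power_decreasing) auto
    ultimately show False
      using J_word_bounds[OF w(1)] J_word_bounds[OF w(2)] less by simp
  qed
  then show ?thesis
    using assms by (metis linorder_neqE_nat)
qed

lemma lvl_eq: "w \<in> J N r k \<Longrightarrow> lvl N r w = k"
  unfolding lvl_def using J_level_unique by blast

lemma Max_ratio_bounds: "0 < Max (r ` {1..N})" "Max (r ` {1..N}) < 1"
proof -
  have "Max (r ` {1..N}) \<in> r ` {1..N}"
    using N_pos by (intro Max_in) auto
  then show "0 < Max (r ` {1..N})" "Max (r ` {1..N}) < 1"
    using ratios by auto
qed

lemma wr_le_Max_power: "set w \<subseteq> {1..N} \<Longrightarrow> wr r w \<le> Max (r ` {1..N}) ^ length w"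
proof (induction w)
  case Nil
  show ?case
    by (simp add: wr_def)
next
  case (Cons i w)
  then have "r i \<le> Max (r ` {1..N})" "0 \<le> wr r w" "wr r w \<le> Max (r ` {1..N}) ^ length w"
    using wr_pos[of w] by (auto simp: less_imp_le)
  then have "r i * wr r w \<le> Max (r ` {1..N}) * Max (r ` {1..N}) ^ length w"
    using Max_ratio_bounds by (intro mult_mono) auto
  then show ?case
    by (simp add: wr_def)
qed

lemma finite_J: "finite (J N r k)"
proof -
  define rmax where "rmax = Max (r ` {1..N})"
  have rmax: "0 < rmax" "rmax < 1"
    unfolding rmax_def using Max_ratio_bounds by auto
  obtain L where L: "rmax ^ L < rmin N r ^ k"
    using real_arch_pow_inv[OF zero_less_power[OF rmin_pos] rmax(2)] by blast
  have "J N r k \<subseteq> {w. set w \<subseteq> {1..N} \<and> length w \<le> Suc L}"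
  proof
    fix w
    assume w: "w \<in> J N r k"
    show "w \<in> {w. set w \<subseteq> {1..N} \<and> length w \<le> Suc L}"
    proof (cases "k = 0")
      case True
      then show ?thesis
        using w by (simp add: J_def)
    next
      case False
      then have w_set: "set w \<subseteq> {1..N}" and w_long: "rmin N r ^ k < wr r (butlast w)"
        using w unfolding J_def words_def by simp_all
      have "set (butlast w) \<subseteq> {1..N}"
        using w_set by (meson in_set_butlastD subsetD subsetI)
      then have "rmax ^ L < rmax ^ length (butlast w)"
        using L w_long wr_le_Max_power[of "butlast w"] unfolding rmax_def by linarith
      then have "length (butlast w) < L"
        using rmax by (metis not_less power_decreasing less_imp_le leD)
      then show ?thesis
        using w_set by simp
    qed
  qed
  then show ?thesis
    by (rule finite_subset) (rule finite_lists_length_le, simp)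
qed

lemma finite_X: "finite (X N r n)"
  unfolding X_def using finite_J by auto

lemma J_subset_X: "k \<le> n \<Longrightarrow> J N r k \<subseteq> X N r n"
  unfolding X_def by auto

lemma X_subset_Suc: "X N r n \<subseteq> X N r (Suc n)"
  unfolding X_def by (auto simp: le_Suc_eq)

sublocale network "cond N S r K \<gamma> \<alpha> lam"
  using lam_pos by unfold_locales (auto simp: cond_def)

lemma energy_eq: "energy N S r K \<gamma> \<alpha> lam n = energy_on (X N r n)"
  unfolding energy_def dirichlet_energy_def by auto

lemma eff_res_eq:
  "eff_res N S r K \<gamma> \<alpha> lam n A B = (if A \<inter> B \<noteq> {} then 0 else inverse (capacity_on (X N r n) A B))"
  unfolding eff_res_def capacity_def energy_eq ..

lemma kappa_in_J: "\<xi> \<in> K \<Longrightarrow> \<kappa> n \<xi> \<in> J N r n"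
  using kappa unfolding kappa_seq_def by blast

lemma kappa_prefix: "\<xi> \<in> K \<Longrightarrow> prefix (\<kappa> n \<xi>) (\<kappa> (Suc n) \<xi>)"
  using kappa unfolding kappa_seq_def by blast

lemma kappa_zero: "\<xi> \<in> K \<Longrightarrow> \<kappa> 0 \<xi> = []"
  using kappa_in_J[of \<xi> 0] unfolding J_def by simp

lemma kappa_in_X: "\<xi> \<in> K \<Longrightarrow> j \<le> n \<Longrightarrow> \<kappa> j \<xi> \<in> X N r n"
  using kappa_in_J J_subset_X by blast

definition q :: real where
  "q = lam / rmin N r powr \<alpha>"

(* For w \<in> J k, wr r w lies between rmin^(k+1) and rmin^k, so (wr r w) powr \<alpha> \<ge> c0 (rmin powr \<alpha>)^k
   whatever the sign of \<alpha>, which the hypotheses leave open. *)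
definition c0 :: real where
  "c0 = min 1 (rmin N r powr \<alpha>)"

lemma q_pos: "0 < q" and q_less_one: "q < 1" and c0_pos: "0 < c0"
    and c0_le_one: "c0 \<le> 1" and c0_le: "c0 \<le> rmin N r powr \<alpha>"
  using rmin_pos lam_pos lam_less unfolding q_def c0_def by auto

lemma cond_vertical_ge:
  assumes "\<xi> \<in> K"
  shows "c0 / q ^ Suc j \<le> cond N S r K \<gamma> \<alpha> lam (\<kappa> (Suc j) \<xi>) (\<kappa> j \<xi>)"
proof -
  define w where "w = \<kappa> (Suc j) \<xi>"
  define p where "p = rmin N r powr \<alpha>"
  have w: "w \<in> J N r (Suc j)"
    unfolding w_def using kappa_in_J[OF assms] .
  have "vert_edge N r w (\<kappa> j \<xi>)"
    unfolding vert_edge_def using w kappa_in_J[OF assms, of j] kappa_prefix[OF assms, of j] w_def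
    by (intro exI[of _ "Suc j"]) auto
  then have cond_w: "cond N S r K \<gamma> \<alpha> lam w (\<kappa> j \<xi>) = wr r w powr \<alpha> * inverse (lam ^ Suc j)"
    unfolding cond_def using lvl_eq[OF w] by simp
  have wr_w_pos: "0 < wr r w"
    using J_word_bounds(1)[OF w] zero_less_power[OF rmin_pos, of "Suc (Suc j)"] by linarith
  have pow: "(rmin N r ^ k) powr \<alpha> = p ^ k" for k
    unfolding p_def using rmin_pos by (rule power_powr)
  have key: "p ^ Suc j * c0 \<le> wr r w powr \<alpha>"
  proof (cases "0 \<le> \<alpha>")
    case True
    have "p ^ Suc j * c0 \<le> p ^ Suc j * p"
      using c0_le unfolding p_def by (intro mult_left_mono) auto
    also have "\<dots> = (rmin N r ^ Suc (Suc j)) powr \<alpha>"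
      unfolding pow by simp
    also have "\<dots> \<le> wr r w powr \<alpha>"
      using True J_word_bounds(1)[OF w] rmin_pos by (intro powr_mono2) auto
    finally show ?thesis .
  next
    case False
    have "p ^ Suc j * c0 \<le> (rmin N r ^ Suc j) powr \<alpha>"
      unfolding pow using c0_le_one by (simp add: mult_left_le p_def)
    also have "\<dots> \<le> wr r w powr \<alpha>"
      using False J_word_bounds(2)[OF w] wr_w_pos by (intro powr_mono2') auto
    finally show ?thesis .
  qed
  have "c0 / q ^ Suc j = p ^ Suc j * c0 * inverse (lam ^ Suc j)"
    unfolding q_def p_def using lam_pos rmin_pos by (simp add: power_divide field_simps)
  also have "\<dots> \<le> wr r w powr \<alpha> * inverse (lam ^ Suc j)"
    using key lam_pos by (intro mult_right_mono) auto
  finally show ?thesis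
    using cond_w w_def by simp
qed

lemma kappa_step_le:
  assumes "\<xi> \<in> K" "j < n"
  shows "\<bar>f (\<kappa> (Suc j) \<xi>) - f (\<kappa> j \<xi>)\<bar> \<le> sqrt (2 * q ^ Suc j / c0) * sqrt (energy_on (X N r n) f)"
proof -
  let ?d = "f (\<kappa> (Suc j) \<xi>) - f (\<kappa> j \<xi>)"
  have "c0 / q ^ Suc j * ?d\<^sup>2 \<le> cond N S r K \<gamma> \<alpha> lam (\<kappa> (Suc j) \<xi>) (\<kappa> j \<xi>) * ?d\<^sup>2"
    using cond_vertical_ge[OF assms(1)] by (rule mult_right_mono) simp
  also have "\<dots> \<le> 2 * energy_on (X N r n) f"
    using assms by (intro conductance_le_dirichlet_energy finite_X kappa_in_X) auto
  finally have "?d\<^sup>2 \<le> 2 * q ^ Suc j / c0 * energy_on (X N r n) f"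
    using q_pos c0_pos by (simp add: field_simps)
  then have "sqrt (?d\<^sup>2) \<le> sqrt (2 * q ^ Suc j / c0 * energy_on (X N r n) f)"
    by (rule real_sqrt_le_mono)
  then show ?thesis
    by (simp only: real_sqrt_mult real_sqrt_abs)
qed

lemma kappa_path_le:
  assumes "\<xi> \<in> K"
  shows "\<bar>f (\<kappa> n \<xi>) - f []\<bar> \<le> n * sqrt (2 * energy_on (X N r n) f / c0)"
proof -
  have "f (\<kappa> n \<xi>) - f [] = (\<Sum>j<n. f (\<kappa> (Suc j) \<xi>) - f (\<kappa> j \<xi>))"
    using sum_lessThan_telescope[of "\<lambda>j. f (\<kappa> j \<xi>)" n] kappa_zero[OF assms] by simp
  also have "\<bar>\<dots>\<bar> \<le> (\<Sum>j<n. \<bar>f (\<kappa> (Suc j) \<xi>) - f (\<kappa> j \<xi>)\<bar>)"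
    by (rule sum_abs)
  also have "\<dots> \<le> (\<Sum>j<n. sqrt (2 / c0) * sqrt (energy_on (X N r n) f))"
  proof (rule sum_mono)
    fix j
    assume "j \<in> {..<n}"
    then have "\<bar>f (\<kappa> (Suc j) \<xi>) - f (\<kappa> j \<xi>)\<bar> \<le> sqrt (2 * q ^ Suc j / c0) * sqrt (energy_on (X N r n) f)"
      using kappa_step_le[OF assms] by simp
    also have "\<dots> \<le> sqrt (2 / c0) * sqrt (energy_on (X N r n) f)"
      using q_pos q_less_one c0_pos power_le_one[of q "Suc j"] dirichlet_energy_nonneg
      by (intro mult_right_mono real_sqrt_le_mono) (auto simp: divide_right_mono)
    finally show "\<bar>f (\<kappa> (Suc j) \<xi>) - f (\<kappa> j \<xi>)\<bar> \<le> sqrt (2 / c0) * sqrt (energy_on (X N r n) f)" .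
  qed
  finally show ?thesis
    by (simp add: real_sqrt_mult[symmetric])
qed

lemma capacity_kappa_pos:
  assumes "\<Phi> \<subseteq> K" "\<Psi> \<subseteq> K" "\<xi> \<in> \<Phi>" "\<eta> \<in> \<Psi>" and disj: "\<kappa> n ` \<Phi> \<inter> \<kappa> n ` \<Psi> = {}"
  shows "0 < capacity_on (X N r n) (\<kappa> n ` \<Phi>) (\<kappa> n ` \<Psi>)"
proof -
  have "\<xi> \<in> K" "\<eta> \<in> K"
    using assms(1-4) by auto
  have "n \<noteq> 0"
  proof
    assume "n = 0"
    then have "\<kappa> n \<xi> = \<kappa> n \<eta>"
      using kappa_zero \<open>\<xi> \<in> K\<close> \<open>\<eta> \<in> K\<close> by simp
    then show False
      using assms(3,4) disj by auto
  qed
  have "c0 / (8 * real n ^ 2) \<le> capacity_on (X N r n) (\<kappa> n ` \<Phi>) (\<kappa> n ` \<Psi>)"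
  proof (rule capacity_ge[OF disj])
    fix f :: "nat list \<Rightarrow> real"
    assume "\<forall>x\<in>\<kappa> n ` \<Phi>. f x = 1" "\<forall>x\<in>\<kappa> n ` \<Psi>. f x = 0"
    then have "1 = (f (\<kappa> n \<xi>) - f []) - (f (\<kappa> n \<eta>) - f [])"
      using assms by simp
    also have "\<dots> \<le> 2 * n * sqrt (2 * energy_on (X N r n) f / c0)"
      using kappa_path_le[OF \<open>\<xi> \<in> K\<close>, of f n] kappa_path_le[OF \<open>\<eta> \<in> K\<close>, of f n] by linarith
    finally have "1 \<le> (2 * n * sqrt (2 * energy_on (X N r n) f / c0))\<^sup>2"
      by (simp add: one_le_power)
    also have "\<dots> = 8 * n\<^sup>2 * energy_on (X N r n) f / c0"
      using dirichlet_energy_nonneg c0_pos by (simp add: power_mult_distrib)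
    finally show "c0 / (8 * real n ^ 2) \<le> energy_on (X N r n) f"
      using c0_pos \<open>n \<noteq> 0\<close> by (simp add: field_simps)
  qed
  moreover have "0 < c0 / (8 * real n ^ 2)"
    using c0_pos \<open>n \<noteq> 0\<close> by simp
  ultimately show ?thesis
    by linarith
qed

abbreviation res :: "nat \<Rightarrow> 'a set \<Rightarrow> 'a set \<Rightarrow> real" where
  "res n \<Phi> \<Psi> \<equiv> eff_res N S r K \<gamma> \<alpha> lam n (\<kappa> n ` \<Phi>) (\<kappa> n ` \<Psi>)"

lemma res_nonneg: "0 \<le> res n \<Phi> \<Psi>"
  unfolding eff_res_eq using capacity_nonneg by simp

lemma res_eq_inverse_capacity:
  "\<kappa> n ` \<Phi> \<inter> \<kappa> n ` \<Psi> = {} \<Longrightarrow> res n \<Phi> \<Psi> = inverse (capacity_on (X N r n) (\<kappa> n ` \<Phi>) (\<kappa> n ` \<Psi>))"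
  unfolding eff_res_eq by simp

lemma resistance_from_near_admissible:
  assumes "\<Phi> \<subseteq> K" "\<Psi> \<subseteq> K" "\<xi> \<in> \<Phi>" "\<eta> \<in> \<Psi>"
    and near_one: "\<forall>x\<in>\<kappa> n ` \<Phi>. 1 - \<delta> \<le> f x" and near_zero: "\<forall>x\<in>\<kappa> n ` \<Psi>. f x \<le> \<delta>"
    and \<delta>: "2 * \<delta> < 1"
  shows "1 - 2 * \<delta> \<le> sqrt (energy_on (X N r n) f) * sqrt (res n \<Phi> \<Psi>)"
proof -
  define t where "t = 1 - 2 * \<delta>"
  define s where "s = sqrt (energy_on (X N r n) f)"
  have "0 < t" "0 \<le> s"
    unfolding t_def s_def using \<delta> dirichlet_energy_nonneg by simp_all
  have disj: "\<kappa> n ` \<Phi> \<inter> \<kappa> n ` \<Psi> = {}"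
    using near_one near_zero \<delta> by fastforce
  let ?C = "capacity_on (X N r n) (\<kappa> n ` \<Phi>) (\<kappa> n ` \<Psi>)"
  have "?C \<le> s\<^sup>2 / t\<^sup>2"
    unfolding t_def s_def using capacity_le_rescaled[OF near_one near_zero \<delta>] dirichlet_energy_nonneg
    by simp
  then have "sqrt ?C \<le> s / t"
    using \<open>0 < t\<close> \<open>0 \<le> s\<close> by (simp add: real_le_lsqrt power_divide)
  then have "t * sqrt ?C \<le> s"
    using \<open>0 < t\<close> by (simp add: le_divide_eq mult.commute)
  have "sqrt (res n \<Phi> \<Psi>) * sqrt ?C = 1"
    using capacity_kappa_pos[OF assms(1-4) disj] res_eq_inverse_capacity[OF disj]
    by (simp add: real_sqrt_inverse)
  then have "t = t * sqrt ?C * sqrt (res n \<Phi> \<Psi>)"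
    by (simp add: mult.assoc mult.commute[of "sqrt ?C"])
  also have "\<dots> \<le> s * sqrt (res n \<Phi> \<Psi>)"
    using \<open>t * sqrt ?C \<le> s\<close> by (intro mult_right_mono) (simp_all add: res_nonneg)
  finally show ?thesis
    unfolding t_def s_def .
qed

lemma admissible_energy_lower_bound:
  assumes K: "\<Phi> \<subseteq> K" "\<Psi> \<subseteq> K" and "\<xi> \<in> \<Phi>" "\<eta> \<in> \<Psi>"
    and f: "\<forall>x\<in>\<kappa> (Suc n) ` \<Phi>. f x = 1" "\<forall>x\<in>\<kappa> (Suc n) ` \<Psi>. f x = 0"
  shows "1 \<le> sqrt (energy_on (X N r (Suc n)) f) * (sqrt (res n \<Phi> \<Psi>) + sqrt (8 * q ^ Suc n / c0))"
proof -
  define s where "s = sqrt (energy_on (X N r (Suc n)) f)"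
  define \<delta> where "\<delta> = sqrt (2 * q ^ Suc n / c0) * s"
  have "0 \<le> s"
    unfolding s_def using dirichlet_energy_nonneg by simp
  have "sqrt (8 * q ^ Suc n / c0) = sqrt 4 * sqrt (2 * q ^ Suc n / c0)"
    unfolding real_sqrt_mult[symmetric] by simp
  then have two_\<delta>: "s * sqrt (8 * q ^ Suc n / c0) = 2 * \<delta>"
    unfolding \<delta>_def by simp
  have step: "\<bar>f (\<kappa> (Suc n) \<zeta>) - f (\<kappa> n \<zeta>)\<bar> \<le> \<delta>" if "\<zeta> \<in> K" for \<zeta>
    unfolding \<delta>_def s_def using kappa_step_le[OF that] by simp
  have "1 \<le> s * sqrt (res n \<Phi> \<Psi>) + 2 * \<delta>"
  proof (cases "1 \<le> 2 * \<delta>")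
    case True
    then show ?thesis
      using \<open>0 \<le> s\<close> res_nonneg by (simp add: add_increasing)
  next
    case False
    have "\<forall>x\<in>\<kappa> n ` \<Phi>. 1 - \<delta> \<le> f x" "\<forall>x\<in>\<kappa> n ` \<Psi>. f x \<le> \<delta>"
      using f step K by fastforce+
    then have "1 - 2 * \<delta> \<le> sqrt (energy_on (X N r n) f) * sqrt (res n \<Phi> \<Psi>)"
      using False by (intro resistance_from_near_admissible[OF assms(1-4)]) auto
    also have "\<dots> \<le> s * sqrt (res n \<Phi> \<Psi>)"
      unfolding s_def using dirichlet_energy_mono[OF X_subset_Suc finite_X]
      by (intro mult_right_mono real_sqrt_le_mono) (auto simp: res_nonneg)
    finally show ?thesis
      by simp
  qed
  then show ?thesis
    using two_\<delta> unfolding s_def by (simp add: distrib_left)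
qed

lemma sqrt_res_Suc_le:
  assumes "\<Phi> \<subseteq> K" "\<Psi> \<subseteq> K" "\<xi> \<in> \<Phi>" "\<eta> \<in> \<Psi>"
  shows "sqrt (res (Suc n) \<Phi> \<Psi>) \<le> sqrt (res n \<Phi> \<Psi>) + sqrt (8 * q ^ Suc n / c0)"
    (is "_ \<le> ?\<rho>")
proof (cases "\<kappa> (Suc n) ` \<Phi> \<inter> \<kappa> (Suc n) ` \<Psi> = {}")
  case True
  have "0 < ?\<rho>"
    using q_pos c0_pos res_nonneg by (intro add_nonneg_pos) simp_all
  have "1 / ?\<rho>\<^sup>2 \<le> capacity_on (X N r (Suc n)) (\<kappa> (Suc n) ` \<Phi>) (\<kappa> (Suc n) ` \<Psi>)"
  proof (rule capacity_ge[OF True])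
    fix f :: "nat list \<Rightarrow> real"
    assume "\<forall>x\<in>\<kappa> (Suc n) ` \<Phi>. f x = 1" "\<forall>x\<in>\<kappa> (Suc n) ` \<Psi>. f x = 0"
    then have "1 \<le> (sqrt (energy_on (X N r (Suc n)) f) * ?\<rho>)\<^sup>2"
      using admissible_energy_lower_bound[OF assms] by (simp add: one_le_power)
    then show "1 / ?\<rho>\<^sup>2 \<le> energy_on (X N r (Suc n)) f"
      using \<open>0 < ?\<rho>\<close> dirichlet_energy_nonneg by (simp add: power_mult_distrib divide_le_eq)
  qed
  then have "res (Suc n) \<Phi> \<Psi> \<le> inverse (1 / ?\<rho>\<^sup>2)"
    unfolding res_eq_inverse_capacity[OF True] using \<open>0 < ?\<rho>\<close> by (intro le_imp_inverse_le) auto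
  then have "res (Suc n) \<Phi> \<Psi> \<le> ?\<rho>\<^sup>2"
    by simp
  then have "sqrt (res (Suc n) \<Phi> \<Psi>) \<le> sqrt (?\<rho>\<^sup>2)"
    by (rule real_sqrt_le_mono)
  then show ?thesis
    using \<open>0 < ?\<rho>\<close> by (simp only: real_sqrt_abs abs_of_pos)
next
  case False
  then have "res (Suc n) \<Phi> \<Psi> = 0"
    unfolding eff_res_eq by simp
  then show ?thesis
    using q_pos c0_pos res_nonneg by (simp add: add_nonneg_nonneg)
qed

lemma res_convergent:
  assumes "\<Phi> \<subseteq> K" "\<Psi> \<subseteq> K" "\<Phi> \<noteq> {}" "\<Psi> \<noteq> {}"
  shows "convergent (\<lambda>n. res n \<Phi> \<Psi>)"
proof -
  obtain \<xi> \<eta> where "\<xi> \<in> \<Phi>" "\<eta> \<in> \<Psi>"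
    using assms(3,4) by blast
  have "sqrt (8 * q ^ Suc n / c0) = sqrt (8 * q / c0) * sqrt q ^ n" for n
    by (simp add: real_sqrt_power[symmetric] real_sqrt_mult[symmetric] mult_ac)
  then have "sqrt (res (Suc n) \<Phi> \<Psi>) \<le> sqrt (res n \<Phi> \<Psi>) + sqrt (8 * q / c0) * sqrt q ^ n" for n
    using sqrt_res_Suc_le[OF assms(1,2) \<open>\<xi> \<in> \<Phi>\<close> \<open>\<eta> \<in> \<Psi>\<close>] by metis
  then have "convergent (\<lambda>n. sqrt (res n \<Phi> \<Psi>))"
    using q_pos q_less_one c0_pos res_nonneg
    by (intro convergent_if_almost_decreasing[where D = "sqrt (8 * q / c0)" and s = "sqrt q"]) auto
  then obtain L where "(\<lambda>n. sqrt (res n \<Phi> \<Psi>)) \<longlonglongrightarrow> L"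
    unfolding convergent_def by blast
  then have "(\<lambda>n. (sqrt (res n \<Phi> \<Psi>))\<^sup>2) \<longlonglongrightarrow> L\<^sup>2"
    by (rule tendsto_power)
  then show ?thesis
    using res_nonneg unfolding convergent_def by auto
qed

lemma lim_res_eq:
  "(\<lambda>n. res n \<Phi> \<Psi>) \<longlonglongrightarrow> L \<Longrightarrow> lim_res N S r K \<gamma> \<alpha> lam \<kappa> \<Phi> \<Psi> = ereal L"
  unfolding lim_res_def by (intro limI tendsto_ereal)

lemma res_union_ge:
  assumes "\<xi> \<in> K" "finite F" "F \<noteq> {}" "F \<subseteq> K" and pos: "\<forall>\<eta>\<in>F. 0 < res n {\<xi>} {\<eta>}"
  shows "inverse (\<Sum>\<eta>\<in>F. inverse (res n {\<xi>} {\<eta>})) \<le> res n {\<xi>} F"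
proof -
  let ?A = "\<kappa> n ` {\<xi>}"
  have disj: "?A \<inter> \<kappa> n ` {\<eta>} = {}" if "\<eta> \<in> F" for \<eta>
    using pos that unfolding eff_res_eq by (auto split: if_splits)
  then have disj_F: "?A \<inter> \<kappa> n ` F = {}"
    by blast
  have "\<kappa> n ` F = (\<Union>\<eta>\<in>F. \<kappa> n ` {\<eta>})"
    by blast
  then have "capacity_on (X N r n) ?A (\<kappa> n ` F) \<le> (\<Sum>\<eta>\<in>F. capacity_on (X N r n) ?A (\<kappa> n ` {\<eta>}))"
    using assms(2,3) disj by (simp add: capacity_UN_le)
  also have "\<dots> = (\<Sum>\<eta>\<in>F. inverse (res n {\<xi>} {\<eta>}))"
    using disj by (intro sum.cong) (simp_all add: eff_res_eq)
  finally have cap_le: "capacity_on (X N r n) ?A (\<kappa> n ` F) \<le> (\<Sum>\<eta>\<in>F. inverse (res n {\<xi>} {\<eta>}))" .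
  obtain \<eta> where "\<eta> \<in> F"
    using assms(3) by blast
  then have "0 < capacity_on (X N r n) ?A (\<kappa> n ` F)"
    using assms(1,4) disj_F by (intro capacity_kappa_pos[of "{\<xi>}" F \<xi> \<eta>]) auto
  then show ?thesis
    using le_imp_inverse_le[OF cap_le] res_eq_inverse_capacity[OF disj_F] by simp
qed

lemma lim_res_singleton_pos:
  assumes "\<xi> \<in> K" "finite F" "F \<noteq> {}" "F \<subseteq> K"
    and pos: "\<forall>\<eta>\<in>F. 0 < lim_res N S r K \<gamma> \<alpha> lam \<kappa> {\<xi>} {\<eta>}"
  shows "0 < lim_res N S r K \<gamma> \<alpha> lam \<kappa> {\<xi>} F"
proof -
  define L where "L \<eta> = lim (\<lambda>n. res n {\<xi>} {\<eta>})" for \<eta>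
  have L: "(\<lambda>n. res n {\<xi>} {\<eta>}) \<longlonglongrightarrow> L \<eta>" if "\<eta> \<in> F" for \<eta>
    unfolding L_def using res_convergent[of "{\<xi>}" "{\<eta>}"] assms(1,4) that
    by (simp add: convergent_LIMSEQ_iff subsetD)
  have L_pos: "0 < L \<eta>" if "\<eta> \<in> F" for \<eta>
    using pos that lim_res_eq[OF L[OF that]] by auto
  have "\<forall>\<^sub>F n in sequentially. \<forall>\<eta>\<in>F. 0 < res n {\<xi>} {\<eta>}"
    using assms(2) L L_pos by (intro eventually_ball_finite ballI order_tendstoD(1)) auto
  then have parallel: "\<forall>\<^sub>F n in sequentially. inverse (\<Sum>\<eta>\<in>F. inverse (res n {\<xi>} {\<eta>})) \<le> res n {\<xi>} F"
    by eventually_elim (use assms(1-4) in \<open>rule res_union_ge\<close>)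
  have sum_pos: "0 < (\<Sum>\<eta>\<in>F. inverse (L \<eta>))"
    using assms(2,3) L_pos by (intro sum_pos) auto
  have "(\<lambda>n. inverse (\<Sum>\<eta>\<in>F. inverse (res n {\<xi>} {\<eta>}))) \<longlonglongrightarrow> inverse (\<Sum>\<eta>\<in>F. inverse (L \<eta>))"
    using L L_pos sum_pos by (intro tendsto_intros) (auto simp: less_le)
  moreover obtain R where R: "(\<lambda>n. res n {\<xi>} F) \<longlonglongrightarrow> R"
    using res_convergent[of "{\<xi>}" F] assms(1,3,4) by (auto simp: convergent_def)
  ultimately have "inverse (\<Sum>\<eta>\<in>F. inverse (L \<eta>)) \<le> R"
    using parallel by (intro tendsto_le[OF trivial_limit_sequentially]) auto
  moreover have "0 < inverse (\<Sum>\<eta>\<in>F. inverse (L \<eta>))"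
    using sum_pos by simp
  ultimately have "0 < R"
    by linarith
  then show ?thesis
    using lim_res_eq[OF R] by simp
qed

end

theorem lemma4p8:
  fixes N :: nat and S :: "nat \<Rightarrow> 'a::euclidean_space \<Rightarrow> 'a" and r :: "nat \<Rightarrow> real"
    and K :: "'a set" and \<gamma> \<alpha> lam :: real and \<kappa> :: "nat \<Rightarrow> 'a \<Rightarrow> nat list"
    and E :: "'a set"
  assumes N: "N \<ge> 2"
    and sim: "\<forall>i\<in>{1..N}. 0 < r i \<and> r i < 1 \<and> similitude (S i) (r i)"
    and osc: "open_set_condition N S"
    and K: "self_similar_set N S K"
    and alpha: "\<alpha> = hausdorff_dim K"
    and gamma: "\<gamma> > 0"
    and kappa: "kappa_seq N S r K \<kappa>"
    and lam: "0 < lam" "lam < rmin N r powr \<alpha>"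
    and E: "finite E" "E \<subseteq> K" "card E \<ge> 2"
    and pos: "\<forall>\<xi>\<in>E. \<forall>\<eta>\<in>E. \<xi> \<noteq> \<eta> \<longrightarrow> lim_res N S r K \<gamma> \<alpha> lam \<kappa> {\<xi>} {\<eta>} > 0"
  shows "\<forall>\<xi>\<in>E. lim_res N S r K \<gamma> \<alpha> lam \<kappa> {\<xi>} (E - {\<xi>}) > 0"
proof
  interpret ifs_network N S r K \<gamma> \<alpha> lam \<kappa>
    using N sim lam kappa by unfold_locales auto
  fix \<xi>
  assume "\<xi> \<in> E"
  then have "card (E - {\<xi>}) = card E - 1"
    using E(1) by simp
  then have "0 < card (E - {\<xi>})"
    using E(3) by linarith
  then have "E - {\<xi>} \<noteq> {}"
    by (simp add: card_gt_0_iff)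
  then show "lim_res N S r K \<gamma> \<alpha> lam \<kappa> {\<xi>} (E - {\<xi>}) > 0"
    using \<open>\<xi> \<in> E\<close> E pos by (intro lim_res_singleton_pos) auto
qed

end
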